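(* For the 0-1-loss $\ell_{0\text{-}1}(\mathrm{h},(x,y))=1-\mathrm{h}(y|x)$ (score $L(\mathrm{q},y)=1-\mathrm{q}(y)$) and $\mathbf{a},\mathbf{b}\in\mathbb{R}^m$, the problem $\mathscr{P}_{\ell_{0\text{-}1}}^{\mathbf{a},\mathbf{b}}$ is equivalent to $$\mathscr{P}_{0\text{-}1}^{\mathbf{a},\mathbf{b}}:\ \min_{\boldsymbol{\mu},\boldsymbol{\eta},\nu}\ \tfrac{1}{2}(\mathbf{b}-\mathbf{a})^{\mathrm{T}}\boldsymbol{\eta}-\tfrac{1}{2}(\mathbf{b}+\mathbf{a})^{\mathrm{T}}\boldsymbol{\mu}-\nu\ \text{ s.t. }\sum_{y\in\mathcal{Y}}(\Phi(x,y)^{\mathrm{T}}\boldsymbol{\mu}+\nu+1)_+\leq 1\ \forall x\in\mathcal{X},\ \boldsymbol{\eta}+\boldsymbol{\mu}\succeq\mathbf{0},\ \boldsymbol{\eta}-\boldsymbol{\mu}\succeq\mathbf{0}.$$ In addition, for a solution $\boldsymbol{\mu}^*,\boldsymbol{\eta}^*,\nu^*$ of $\mathscr{P}_{0\text{-}1}^{\mathbf{a},\mathbf{b}}$, the condition $\ell_{0\text{-}1}(\mathrm{h},(x,y))+\Phi(x,y)^{\mathrm{T}}\boldsymbol{\mu}^*+\nu^*\leq 0$ for all $x,y$ (which makes $\mathrm{h}$ a 0-1-MRC for $\mathcal{U}^{\mathbf{a},\mathbf{b}}$) becomes $$\mathrm{h}(y|x)\geq \Phi(x,y)^{\mathrm{T}}\boldsymbol{\mu}^*+\nu^*+1\quad\forall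 x\in\mathcal{X},y\in\mathcal{Y}.$$
   Context: Let $\mathcal{X},\mathcal{Y}$ be finite nonempty sets, $\mathcal{Y}=\{1,\dots,|\mathcal{Y}|\}$; $\Delta(\mathcal{Y})$ is the set of probability distributions on $\mathcal{Y}$. A classification rule $\mathrm{h}$ assigns to each $x$ a distribution $\mathrm{h}(\cdot|x)\in\Delta(\mathcal{Y})$. For a score function $L$ with loss $\ell(\mathrm{h},(x,y))=L(\mathrm{h}(\cdot|x),y)$: $\Phi:\mathcal{X}\times\mathcal{Y}\to\mathbb{R}^m$ is a feature mapping, $\boldsymbol{\Phi}(x,\cdot)$ is the $|\mathcal{Y}|\times m$ matrix with rows $\Phi(x,y)^{\mathrm{T}}$, $\mathbf{1}$ the all-ones vector, $\preceq,\succeq$ componentwise, $\mathcal{L}=\{\mathbf{c}\in\mathbb{R}^{|\mathcal{Y}|}:\exists\,\mathrm{q}\in\Delta(\mathcal{Y}),\ \mathbf{c}+(L(\mathrm{q},y))_y\preceq\mathbf{0}\}$, and $\mathscr{P}_{\ell}^{\mathbf{a},\mathbf{b}}$ is $\min_{\boldsymbol{\mu},\boldsymbol{\eta},\nu}\tfrac12(\mathbf{b}-\mathbf{a})^{\mathrm{T}}\boldsymbol{\eta}-\tfrac12(\mathbf{b}+\mathbf{a})^{\mathrm{T}}\boldsymbol{\mu}-\nu$ s.t. $\boldsymbol{\Phi}(x,\cdot)\boldsymbol{\mu}+\nu\mathbf{1}\in\mathcal{L}$ $\forall x$, $\boldsymbol{\eta}\pm\boldsymbol{\mu}\succeq\mathbf{0}$.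 $\mathcal{U}^{\mathbf{a},\mathbf{b}}=\{\mathrm{p}\in\Delta(\mathcal{X}\times\mathcal{Y}):\mathbf{a}\preceq\mathbb{E}_{\mathrm{p}}\{\Phi\}\preceq\mathbf{b}\}$; an $\ell$-MRC for $\mathcal{U}$ minimizes $\max_{\mathrm{p}\in\mathcal{U}}\sum_{x,y}\mathrm{p}(x,y)\ell(\mathrm{h},(x,y))$ over all classification rules. $(t)_+=\max(t,0)$. *)

theory Defs
  imports "HOL-Analysis.Analysis"
begin

definition prob_dists :: "('y::finite \<Rightarrow> real) set" where
  "prob_dists = {q. (\<forall>y. 0 \<le> q y) \<and> sum q UNIV = 1}"

definition class_rule :: "('x \<Rightarrow> 'y::finite \<Rightarrow> real) \<Rightarrow> bool" where
  "class_rule h \<longleftrightarrow> (\<forall>x. h x \<in> prob_dists)"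

definition Lset :: "(('y::finite \<Rightarrow> real) \<Rightarrow> 'y \<Rightarrow> real) \<Rightarrow> ('y \<Rightarrow> real) set" where
  "Lset L = {c. \<exists>q\<in>prob_dists. \<forall>y. c y + L q y \<le> 0}"

definition score01 :: "('y \<Rightarrow> real) \<Rightarrow> 'y \<Rightarrow> real" where
  "score01 q y = 1 - q y"

definition loss :: "(('y \<Rightarrow> real) \<Rightarrow> 'y \<Rightarrow> real) \<Rightarrow> ('x \<Rightarrow> 'y \<Rightarrow> real) \<Rightarrow> 'x \<times> 'y \<Rightarrow> real" where
  "loss L h xy = L (h (fst xy)) (snd xy)"

definition mrc_obj :: "real^'m \<Rightarrow> real^'m \<Rightarrow> (real^'m) \<times> (real^'m) \<times> real \<Rightarrow> real" where
  "mrc_obj a b z = (case z of (\<mu>, \<eta>, \<nu>) \<Rightarrow>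
     (1/2) * ((b - a) \<bullet> \<eta>) - (1/2) * ((b + a) \<bullet> \<mu>) - \<nu>)"

definition P_ell_feasible ::
  "(('y::finite \<Rightarrow> real) \<Rightarrow> 'y \<Rightarrow> real) \<Rightarrow> ('x::finite \<Rightarrow> 'y \<Rightarrow> real^'m)
     \<Rightarrow> (real^'m) \<times> (real^'m) \<times> real \<Rightarrow> bool" where
  "P_ell_feasible L \<Phi> z = (case z of (\<mu>, \<eta>, \<nu>) \<Rightarrow>
     (\<forall>x. (\<lambda>y. \<Phi> x y \<bullet> \<mu> + \<nu>) \<in> Lset L) \<and>
     (\<forall>i. 0 \<le> \<eta> $ i + \<mu> $ i \<and> 0 \<le> \<eta> $ i - \<mu> $ i))"

definition P01_feasible ::
  "('x::finite \<Rightarrow> 'y::finite \<Rightarrow> real^'m) \<Rightarrow> (real^'m) \<times> (real^'m) \<times> real \<Rightarrow> bool" where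
  "P01_feasible \<Phi> z = (case z of (\<mu>, \<eta>, \<nu>) \<Rightarrow>
     (\<forall>x. (\<Sum>y\<in>UNIV. max (\<Phi> x y \<bullet> \<mu> + \<nu> + 1) 0) \<le> 1) \<and>
     (\<forall>i. 0 \<le> \<eta> $ i + \<mu> $ i \<and> 0 \<le> \<eta> $ i - \<mu> $ i))"

definition is_solution :: "('z \<Rightarrow> bool) \<Rightarrow> ('z \<Rightarrow> real) \<Rightarrow> 'z \<Rightarrow> bool" where
  "is_solution F f z \<longleftrightarrow> F z \<and> (\<forall>z'. F z' \<longrightarrow> f z \<le> f z')"

end

theory Submission
  imports Defs
begin

text \<open>For the 0-1 score the constraint \<open>c y + L(q, y) \<le> 0\<close> reads \<open>q y \<ge> c y + 1\<close>. Since
  \<open>q \<ge> 0\<close> as well, a distribution \<open>q\<close> satisfying it exists exactly when the positive parts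
  \<open>(c y + 1)\<^sub>+\<close> have total mass at most 1: any remaining mass can be spread evenly over the
  labels. Hence both problems have the same feasible set, the same objective and therefore the
  same solutions, and the MRC condition is a rearrangement of \<open>1 - h(y|x)\<close>.\<close>

lemma Lset_score01_imp_sum_pos_part_le_1:
  assumes "c \<in> Lset score01"
  shows "(\<Sum>y\<in>UNIV. max (c y + 1) 0) \<le> 1"
proof -
  obtain q where q: "q \<in> prob_dists" and le: "\<And>y. c y + (1 - q y) \<le> 0"
    using assms by (auto simp: Lset_def score01_def)
  have "(\<Sum>y\<in>UNIV. max (c y + 1) 0) \<le> (\<Sum>y\<in>UNIV. q y)"
  proof (rule sum_mono)
    fix y
    show "max (c y + 1) 0 \<le> q y"
      using le[of y] q by (simp add: prob_dists_def)
  qed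
  also have "\<dots> = 1"
    using q by (simp add: prob_dists_def)
  finally show ?thesis .
qed

lemma sum_pos_part_le_1_imp_Lset_score01:
  fixes c :: "'y::finite \<Rightarrow> real"
  assumes sum_le: "(\<Sum>y\<in>UNIV. max (c y + 1) 0) \<le> 1"
  shows "c \<in> Lset score01"
proof -
  define S where "S = (\<Sum>y\<in>UNIV. max (c y + 1) 0)"
  define n where "n = real (card (UNIV :: 'y set))"
  define q where "q y = max (c y + 1) 0 + (1 - S) / n" for y
  have "n > 0"
    by (simp add: n_def)
  have slack_nonneg: "(1 - S) / n \<ge> 0"
    using sum_le \<open>n > 0\<close> by (simp add: S_def)
  have "sum q UNIV = S + n * ((1 - S) / n)"
    by (simp add: q_def sum.distrib S_def n_def)
  also have "\<dots> = 1"
    using \<open>n > 0\<close> by simp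
  finally have "q \<in> prob_dists"
    using slack_nonneg by (simp add: prob_dists_def q_def add_nonneg_nonneg)
  moreover have "c y + score01 q y \<le> 0" for y
    using slack_nonneg by (simp add: q_def score01_def)
  ultimately show ?thesis
    by (auto simp: Lset_def)
qed

lemma Lset_score01_iff: "c \<in> Lset score01 \<longleftrightarrow> (\<Sum>y\<in>UNIV. max (c y + 1) 0) \<le> 1"
  using Lset_score01_imp_sum_pos_part_le_1 sum_pos_part_le_1_imp_Lset_score01 by blast

lemma P_ell_feasible_score01_eq: "P_ell_feasible score01 \<Phi> = P01_feasible \<Phi>"
  by (auto simp: fun_eq_iff P_ell_feasible_def P01_feasible_def Lset_score01_iff add.assoc)

lemma loss_score01_plus_le_0_iff:
  "loss score01 h (x, y) + t \<le> 0 \<longleftrightarrow> h x y \<ge> t + 1"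
  by (auto simp: loss_def score01_def)

theorem corollary4:
  fixes \<Phi> :: "'x::finite \<Rightarrow> 'y::finite \<Rightarrow> real^'m"
    and a b :: "real^'m"
  shows "(\<forall>z. P_ell_feasible score01 \<Phi> z \<longleftrightarrow> P01_feasible \<Phi> z)
    \<and> (\<forall>z. is_solution (P_ell_feasible score01 \<Phi>) (mrc_obj a b) z
            \<longleftrightarrow> is_solution (P01_feasible \<Phi>) (mrc_obj a b) z)
    \<and> (\<forall>\<mu>s \<eta>s \<nu>s h. is_solution (P01_feasible \<Phi>) (mrc_obj a b) (\<mu>s, \<eta>s, \<nu>s)
          \<longrightarrow> class_rule h
          \<longrightarrow> ((\<forall>x y. loss score01 h (x, y) + \<Phi> x y \<bullet> \<mu>s + \<nu>s \<le> 0)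
               \<longleftrightarrow> (\<forall>x y. h x y \<ge> \<Phi> x y \<bullet> \<mu>s + \<nu>s + 1)))"
  by (simp add: P_ell_feasible_score01_eq loss_score01_plus_le_0_iff add.assoc)

end
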